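(* Let $\mathbf{X}\in\mathbb{R}^{M\times N_x}$ and $\mathbf{Y}\in\mathbb{R}^{M\times N_y}$ (with $N_x,N_y$ possibly different), and let $\mathbf{K}_X=\mathbf{C}\mathbf{X}\mathbf{X}^\top\mathbf{C}$, $\mathbf{K}_Y=\mathbf{C}\mathbf{Y}\mathbf{Y}^\top\mathbf{C}$. Then $$\mathcal{B}(\mathbf{K}_X,\mathbf{K}_Y)=\mathcal{P}(\mathbf{X},\mathbf{Y}),$$ and, if $\mathbf{C}\mathbf{X}\neq0$ and $\mathbf{C}\mathbf{Y}\neq0$, $$\mathrm{NBS}(\mathbf{K}_X,\mathbf{K}_Y)=\cos\theta^*(\mathbf{X},\mathbf{Y}).$$
   Context: $\mathbf{C}=\mathbf{I}-\tfrac1M\mathbf{1}\mathbf{1}^\top$ is the $M\times M$ centering matrix. $\mathbf{\Sigma}_X=\mathbf{X}^\top\mathbf{C}\mathbf{X}$, $\mathbf{\Sigma}_Y=\mathbf{Y}^\top\mathbf{C}\mathbf{Y}$, $\mathbf{\Sigma}_{XY}=\mathbf{X}^\top\mathbf{C}\mathbf{Y}$; $\Vert\cdot\Vert_*$ is the nuclear norm. The (generalized) Procrustes distance is $\mathcal{P}(\mathbf{X},\mathbf{Y})=\sqrt{\operatorname{Tr}[\mathbf{\Sigma}_X]+\operatorname{Tr}[\mathbf{\Sigma}_Y]-2\Vert\mathbf{\Sigma}_{XY}\Vert_*}$ and the (generalized) Riemannian shape distance is $\theta^*(\mathbf{X},\mathbf{Y})=\arccos\big(\Vert\mathbf{\Sigma}_{XY}\Vert_*/\sqrt{\operatorname{Tr}[\mathbf{\Sigma}_X]\operatorname{Tr}[\mathbf{\Sigma}_Y]}\big)$.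 For PSD $\mathbf{A}$, $\mathbf{A}^{1/2}$ is its unique PSD square root; the fidelity is $\mathcal{F}(\mathbf{A},\mathbf{B})=\operatorname{Tr}[(\mathbf{A}^{1/2}\mathbf{B}\mathbf{A}^{1/2})^{1/2}]$; the Bures distance is $\mathcal{B}(\mathbf{A},\mathbf{B})=\sqrt{\operatorname{Tr}\mathbf{A}+\operatorname{Tr}\mathbf{B}-2\mathcal{F}(\mathbf{A},\mathbf{B})}$; the normalized Bures similarity is $\mathrm{NBS}(\mathbf{A},\mathbf{B})=\mathcal{F}(\mathbf{A},\mathbf{B})/\sqrt{\operatorname{Tr}\mathbf{A}\operatorname{Tr}\mathbf{B}}$. *)

theory Defs
  imports "HOL-Analysis.Analysis"
begin

definition centering :: "real^'m^'m" where
  "centering = (\<chi> i j. (if i = j then 1 else 0) - 1 / real CARD('m))"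

definition psd :: "real^'n^'n \<Rightarrow> bool" where
  "psd A \<longleftrightarrow> transpose A = A \<and> (\<forall>x. 0 \<le> x \<bullet> (A *v x))"

definition msqrt :: "real^'n^'n \<Rightarrow> real^'n^'n" where
  "msqrt A = (THE B. psd B \<and> B ** B = A)"

text \<open>Nuclear norm (sum of singular values) = Tr[(A^T A)^(1/2)].\<close>
definition nuclear_norm :: "real^'n^'m \<Rightarrow> real" where
  "nuclear_norm A = trace (msqrt (transpose A ** A))"

definition SigmaX :: "real^'n^'m \<Rightarrow> real^'n^'n" where
  "SigmaX X = transpose X ** centering ** X"

definition SigmaXY :: "real^'n^'m \<Rightarrow> real^'k^'m \<Rightarrow> real^'k^'n" where
  "SigmaXY X Y = transpose X ** centering ** Y"

definition procrustes :: "real^'n^'m \<Rightarrow> real^'k^'m \<Rightarrow> real" where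
  "procrustes X Y = sqrt (trace (SigmaX X) + trace (SigmaX Y) - 2 * nuclear_norm (SigmaXY X Y))"

definition shape_dist :: "real^'n^'m \<Rightarrow> real^'k^'m \<Rightarrow> real" where
  "shape_dist X Y = arccos (nuclear_norm (SigmaXY X Y) / sqrt (trace (SigmaX X) * trace (SigmaX Y)))"

definition fidelity :: "real^'n^'n \<Rightarrow> real^'n^'n \<Rightarrow> real" where
  "fidelity A B = trace (msqrt (msqrt A ** B ** msqrt A))"

definition bures :: "real^'n^'n \<Rightarrow> real^'n^'n \<Rightarrow> real" where
  "bures A B = sqrt (trace A + trace B - 2 * fidelity A B)"

definition NBS :: "real^'n^'n \<Rightarrow> real^'n^'n \<Rightarrow> real" where
  "NBS A B = fidelity A B / sqrt (trace A * trace B)"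

end

theory Submission
  imports Defs
begin

text \<open>Put A = C X and B = C Y. As C is a symmetric idempotent, K_X = A A^T, K_Y = B B^T,
  Sigma_X = A^T A, Sigma_Y = B^T B and Sigma_XY = A^T B, so the traces agree by cyclicity.
  With R = K_X^(1/2) and P = R B one has R K_Y R = P P^T, and tr (P P^T)^(1/2) = tr (P^T P)^(1/2),
  both being the sum of the singular values of P. Since P^T P = B^T A A^T B = Sigma_XY^T Sigma_XY,
  the fidelity of K_X and K_Y is the nuclear norm of Sigma_XY, which gives the Bures identity.
  For the NBS identity it remains to see that the ratio inside arccos lies in [0, 1], i.e. the
  Cauchy--Schwarz inequality for the nuclear norm.\<close>

lemma inner_matrix_vector_transpose:
  "(x::real^'m) \<bullet> (A *v y) = (transpose A *v x) \<bullet> (y::real^'n)"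
  by (metis dot_lmul_matrix transpose_matrix_vector)

lemma inner_gram_matrix_vector:
  fixes A :: "real^'n^'m"
  shows "x \<bullet> ((transpose A ** A) *v y) = (A *v x) \<bullet> (A *v y)"
  by (metis inner_matrix_vector_transpose matrix_vector_mul_assoc transpose_transpose)

lemma nonneg_quadratic_imp_linear_coeff_eq_0:
  fixes a b :: real
  assumes "0 \<le> b" and nonneg: "\<And>t. 0 \<le> 2 * t * a + t\<^sup>2 * b"
  shows "a = 0"
proof -
  define t where "t = - a / (b + 1)"
  have a_eq: "a = - (t * (b + 1))" using \<open>0 \<le> b\<close> by (simp add: t_def)
  have "(b + 1)\<^sup>2 * (2 * t * a + t\<^sup>2 * b) = - (a\<^sup>2 * (b + 2))"
    by (simp add: a_eq power2_eq_square algebra_simps)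
  moreover have "0 \<le> (b + 1)\<^sup>2 * (2 * t * a + t\<^sup>2 * b)"
    using nonneg by simp
  ultimately have "a\<^sup>2 * (b + 2) \<le> 0" by linarith
  with \<open>0 \<le> b\<close> show ?thesis by (simp add: mult_le_0_iff)
qed

lemma symmetric_nonneg_form_zero_imp_orthogonal:
  fixes G :: "real^'n^'n"
  assumes sym: "transpose G = G" and S: "subspace S"
    and nonneg: "\<And>v. v \<in> S \<Longrightarrow> 0 \<le> v \<bullet> (G *v v)"
    and u: "u \<in> S" "u \<bullet> (G *v u) = 0" and v: "v \<in> S"
  shows "v \<bullet> (G *v u) = 0"
proof (rule nonneg_quadratic_imp_linear_coeff_eq_0)
  show "0 \<le> v \<bullet> (G *v v)" using nonneg v .
  fix t :: real
  have "u \<bullet> (G *v v) = v \<bullet> (G *v u)"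
    using inner_matrix_vector_transpose[of u G v] sym by (simp add: inner_commute)
  moreover have "0 \<le> (u + t *\<^sub>R v) \<bullet> (G *v (u + t *\<^sub>R v))"
    using S u v by (auto intro!: nonneg subspace_add subspace_scale)
  ultimately show "0 \<le> 2 * t * (v \<bullet> (G *v u)) + t\<^sup>2 * (v \<bullet> (G *v v))"
    using u(2)
    by (simp add: algebra_simps power2_eq_square)
qed

text \<open>The maximiser of the Rayleigh quotient on the unit sphere of S is an eigenvector:
  the form of \<open>\<mu> I - A\<close> is nonnegative on S and vanishes at the maximiser.\<close>
lemma symmetric_matrix_eigenvector_in_invariant_subspace:
  fixes A :: "real^'n^'n"
  assumes sym: "transpose A = A" and S: "subspace S" "S \<noteq> {0}"
    and inv: "\<And>x. x \<in> S \<Longrightarrow> A *v x \<in> S"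
  obtains u where "u \<in> S" "norm u = 1" "A *v u = (u \<bullet> (A *v u)) *\<^sub>R u"
proof -
  define K where "K = S \<inter> sphere 0 1"
  obtain z where z: "z \<in> S" "z \<noteq> 0" using S subspace_0 by blast
  have "z /\<^sub>R norm z \<in> K" using z S by (auto simp: K_def subspace_scale)
  moreover have "compact K"
    unfolding K_def using S closed_subspace by (intro closed_Int_compact) auto
  moreover have "continuous_on K (\<lambda>x. x \<bullet> (A *v x))" by (intro continuous_intros)
  ultimately obtain u where u: "u \<in> K"
    and umax: "\<And>y. y \<in> K \<Longrightarrow> y \<bullet> (A *v y) \<le> u \<bullet> (A *v u)"
    using continuous_attains_sup by (metis empty_iff)
  define \<mu> where "\<mu> = u \<bullet> (A *v u)"
  define G where "G = \<mu> *\<^sub>R mat 1 - A"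
  have Gv: "G *v v = \<mu> *\<^sub>R v - A *v v" for v
    by (simp add: G_def matrix_vector_mult_diff_rdistrib flip: scaleR_matrix_vector_assoc)
  have G_sym: "transpose G = G"
    using sym by (simp add: G_def transpose_def vec_eq_iff mat_def)
  have uS: "u \<in> S" and uu: "u \<bullet> u = 1" using u by (auto simp: K_def norm_eq_1)
  have nonneg: "0 \<le> v \<bullet> (G *v v)" if v: "v \<in> S" for v
  proof (cases "v = 0")
    case False
    have "v /\<^sub>R norm v \<in> K" using v False S by (auto simp: K_def subspace_scale)
    hence "(v \<bullet> (A *v v)) / (norm v)\<^sup>2 \<le> \<mu>"
      using umax[of "v /\<^sub>R norm v"] by (simp add: \<mu>_def matrix_vector_mult_scaleR power2_eq_square divide_inverse mult_ac)
    hence "v \<bullet> (A *v v) \<le> \<mu> * (norm v)\<^sup>2" using False by (simp add: divide_le_eq)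
    thus ?thesis by (simp add: Gv inner_diff_right power2_norm_eq_inner)
  qed simp
  have "u \<bullet> (G *v u) = 0" by (simp add: Gv inner_diff_right uu \<mu>_def)
  moreover have "G *v u \<in> S" using uS S inv by (simp add: Gv subspace_diff subspace_scale)
  ultimately have "(G *v u) \<bullet> (G *v u) = 0"
    using symmetric_nonneg_form_zero_imp_orthogonal[OF G_sym S(1) nonneg] uS by blast
  hence "A *v u = \<mu> *\<^sub>R u" by (simp add: Gv)
  with that uS u show ?thesis by (auto simp: K_def \<mu>_def)
qed

lemma orthogonal_complement_within_subspace:
  fixes u :: "'a::euclidean_space"
  assumes S: "subspace S" and u: "u \<in> S" "u \<bullet> u = 1"
  defines "S' \<equiv> {x \<in> S. u \<bullet> x = 0}"
  shows "subspace S'" and "dim S' < dim S" and "\<And>x. x \<in> S \<Longrightarrow> x - (u \<bullet> x) *\<^sub>R u \<in> S'"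
proof -
  show sub': "subspace S'" using S by (auto simp: S'_def subspace_def inner_add_right)
  have "u \<notin> S'" using u by (simp add: S'_def)
  moreover have "S' \<subseteq> S" by (auto simp: S'_def)
  ultimately have "S' \<subset> S" using u by blast
  thus "dim S' < dim S" using dim_psubset[of S' S] sub' S by (metis span_eq_iff)
  show "x - (u \<bullet> x) *\<^sub>R u \<in> S'" if "x \<in> S" for x
    using that S u by (auto simp: S'_def inner_diff_right intro: subspace_diff subspace_scale)
qed

lemma symmetric_matrix_eigenbasis_of_invariant_subspace:
  fixes A :: "real^'n^'n"
  assumes sym: "transpose A = A"
  shows "subspace S \<Longrightarrow> (\<And>x. x \<in> S \<Longrightarrow> A *v x \<in> S) \<Longrightarrow>
    \<exists>B\<subseteq>S. pairwise orthogonal B \<and> (\<forall>b\<in>B. norm b = 1) \<and> span B = S \<and>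
        (\<forall>b\<in>B. A *v b = (b \<bullet> (A *v b)) *\<^sub>R b)"
proof (induction "dim S" arbitrary: S rule: less_induct)
  case (less S)
  show ?case
  proof (cases "S = {0}")
    case True
    then show ?thesis by (intro exI[of _ "{}"]) auto
  next
    case False
    obtain u where uS: "u \<in> S" and nu: "norm u = 1" and eig: "A *v u = (u \<bullet> (A *v u)) *\<^sub>R u"
      using symmetric_matrix_eigenvector_in_invariant_subspace[OF sym less.prems(1) False less.prems(2)] .
    have uu: "u \<bullet> u = 1" using nu by (simp add: norm_eq_1)
    define S' where "S' = {x \<in> S. u \<bullet> x = 0}"
    note S' = orthogonal_complement_within_subspace[OF less.prems(1) uS uu, folded S'_def]
    have inv': "A *v x \<in> S'" if "x \<in> S'" for x
    proof -
      have "u \<bullet> (A *v x) = (A *v u) \<bullet> x"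
        using inner_matrix_vector_transpose[of u A x] sym by simp
      also have "\<dots> = (u \<bullet> (A *v u)) * (u \<bullet> x)" by (metis eig inner_scaleR_left)
      finally show ?thesis using that less.prems(2) by (simp add: S'_def)
    qed
    obtain B' where B': "B' \<subseteq> S'" "pairwise orthogonal B'" "\<forall>b\<in>B'. norm b = 1"
      "span B' = S'" "\<forall>b\<in>B'. A *v b = (b \<bullet> (A *v b)) *\<^sub>R b"
      using less.hyps[OF S'(2,1) inv'] by blast
    have "S \<subseteq> span (insert u B')"
    proof
      fix x assume x: "x \<in> S"
      have "x - (u \<bullet> x) *\<^sub>R u \<in> span (insert u B')"
        using S'(3)[OF x] B'(4) span_mono[of B' "insert u B'"] by auto
      moreover have "(u \<bullet> x) *\<^sub>R u \<in> span (insert u B')" by (simp add: span_base span_mul)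
      ultimately show "x \<in> span (insert u B')" using span_add by fastforce
    qed
    moreover have "insert u B' \<subseteq> S" using B'(1) uS by (auto simp: S'_def)
    moreover have "pairwise orthogonal (insert u B')"
      using B'(1,2) by (intro pairwise_orthogonal_insert) (auto simp: S'_def orthogonal_def)
    ultimately show ?thesis
      using B'(3,5) nu eig less.prems(1)
      by (intro exI[of _ "insert u B'"]) (auto simp: span_minimal subset_antisym)
  qed
qed

definition orthonormal_basis :: "(real^'n) set \<Rightarrow> bool" where
  "orthonormal_basis B \<longleftrightarrow> pairwise orthogonal B \<and> (\<forall>b\<in>B. norm b = 1) \<and> span B = UNIV"

definition eigenbasis :: "real^'n^'n \<Rightarrow> (real^'n) set \<Rightarrow> bool" where
  "eigenbasis A B \<longleftrightarrow> orthonormal_basis B \<and> (\<forall>b\<in>B. A *v b = (b \<bullet> (A *v b)) *\<^sub>R b)"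

lemma symmetric_matrix_has_eigenbasis:
  fixes A :: "real^'n^'n"
  assumes "transpose A = A"
  obtains B where "eigenbasis A B"
  using symmetric_matrix_eigenbasis_of_invariant_subspace[OF assms subspace_UNIV]
  by (auto simp: eigenbasis_def orthonormal_basis_def)

lemma orthonormal_basis_Basis: "orthonormal_basis (Basis :: (real^'n) set)"
  by (auto simp: orthonormal_basis_def pairwise_def orthogonal_def inner_Basis)

lemma orthonormal_basis_finite: "orthonormal_basis B \<Longrightarrow> finite B"
  by (simp add: orthonormal_basis_def pairwise_orthogonal_imp_finite)

lemma orthonormal_basis_inner:
  "orthonormal_basis B \<Longrightarrow> b \<in> B \<Longrightarrow> c \<in> B \<Longrightarrow> b \<bullet> c = (if b = c then 1 else 0)"
  by (auto simp: orthonormal_basis_def pairwise_def orthogonal_def norm_eq_1)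

lemma orthonormal_basis_sum_expand: "orthonormal_basis B \<Longrightarrow> (\<Sum>b\<in>B. (x \<bullet> b) *\<^sub>R b) = x"
  by (rule orthonormal_basis_expand) (auto simp: orthonormal_basis_def orthonormal_basis_finite)

lemma orthonormal_basis_parseval:
  assumes "orthonormal_basis B"
  shows "(\<Sum>b\<in>B. (x \<bullet> b)\<^sup>2) = x \<bullet> x"
proof -
  have "x \<bullet> x = x \<bullet> (\<Sum>b\<in>B. (x \<bullet> b) *\<^sub>R b)"
    using orthonormal_basis_sum_expand[OF assms] by simp
  thus ?thesis by (simp add: inner_sum_right power2_eq_square)
qed

lemma matrix_eq_on_orthonormal_basis:
  fixes M N :: "real^'n^'m"
  assumes B: "orthonormal_basis B" and eq: "\<And>b. b \<in> B \<Longrightarrow> M *v b = N *v b"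
  shows "M = N"
proof -
  have "M *v x = N *v x" for x
    using linear_eq_on_span[OF matrix_vector_mul_linear matrix_vector_mul_linear, of B] eq B
    by (auto simp: orthonormal_basis_def)
  thus ?thesis by (simp add: matrix_eq)
qed

lemma trace_eq_sum_orthonormal_basis:
  fixes M :: "real^'n^'n"
  assumes B: "orthonormal_basis B"
  shows "trace M = (\<Sum>b\<in>B. b \<bullet> (M *v b))"
proof -
  have delta: "(\<Sum>b\<in>B. b$i * b$j) = (if i = j then 1 else 0)" for i j
  proof -
    have "(axis j (1::real))$i = (\<Sum>b\<in>B. (axis j 1 \<bullet> b) *\<^sub>R b)$i"
      using orthonormal_basis_sum_expand[OF B, of "axis j 1"] by simp
    also have "\<dots> = (\<Sum>b\<in>B. b$j * b$i)" by (simp add: inner_axis')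
    finally show ?thesis by (simp add: axis_def mult.commute)
  qed
  have "(\<Sum>b\<in>B. b \<bullet> (M *v b)) = (\<Sum>b\<in>B. \<Sum>i\<in>UNIV. \<Sum>j\<in>UNIV. M$i$j * (b$i * b$j))"
    by (simp add: inner_vec_def matrix_vector_mult_def sum_distrib_left mult_ac)
  also have "\<dots> = (\<Sum>i\<in>UNIV. \<Sum>j\<in>UNIV. M$i$j * (\<Sum>b\<in>B. b$i * b$j))"
  proof -
    have "(\<Sum>b\<in>B. \<Sum>i\<in>UNIV. \<Sum>j\<in>UNIV. M$i$j * (b$i * b$j))
        = (\<Sum>i\<in>UNIV. \<Sum>j\<in>UNIV. \<Sum>b\<in>B. M$i$j * (b$i * b$j))"
      by (subst sum.swap) (rule sum.cong[OF refl], rule sum.swap)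
    thus ?thesis by (simp add: sum_distrib_left)
  qed
  also have "\<dots> = (\<Sum>i\<in>UNIV. \<Sum>j\<in>UNIV. if j = i then M$i$j else 0)"
    by (intro sum.cong) (auto simp: delta)
  finally show ?thesis by (simp add: trace_def)
qed

definition spectral_matrix :: "(real^'n) set \<Rightarrow> (real^'n \<Rightarrow> real) \<Rightarrow> real^'n^'n" where
  "spectral_matrix B f = (\<chi> i j. \<Sum>b\<in>B. f b * (b$i * b$j))"

lemma spectral_matrix_mult_vector:
  "spectral_matrix B f *v x = (\<Sum>b\<in>B. (f b * (b \<bullet> x)) *\<^sub>R b)"
proof -
  have "(spectral_matrix B f *v x)$i = (\<Sum>b\<in>B. (f b * (b \<bullet> x)) *\<^sub>R b)$i" for i
  proof -
    have "(spectral_matrix B f *v x)$i = (\<Sum>j\<in>UNIV. \<Sum>b\<in>B. f b * b$i * (b$j * x$j))"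
      by (simp add: spectral_matrix_def matrix_vector_mult_def sum_distrib_left mult_ac)
    also have "\<dots> = (\<Sum>b\<in>B. \<Sum>j\<in>UNIV. f b * b$i * (b$j * x$j))" by (rule sum.swap)
    finally show ?thesis by (simp add: inner_vec_def sum_distrib_left mult_ac)
  qed
  thus ?thesis by (simp add: vec_eq_iff)
qed

lemma spectral_matrix_eigenvector:
  assumes B: "orthonormal_basis B" and c: "c \<in> B"
  shows "spectral_matrix B f *v c = f c *\<^sub>R c"
proof -
  have "spectral_matrix B f *v c = (\<Sum>b\<in>B. if b = c then f c *\<^sub>R c else 0)"
    unfolding spectral_matrix_mult_vector
    by (intro sum.cong refl) (simp add: orthonormal_basis_inner[OF B _ c])
  also have "\<dots> = f c *\<^sub>R c" using orthonormal_basis_finite[OF B] c by (simp add: sum.delta')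
  finally show ?thesis .
qed

lemma psd_spectral_matrix:
  assumes "\<And>b. b \<in> B \<Longrightarrow> 0 \<le> f b"
  shows "psd (spectral_matrix B f)"
proof -
  have "transpose (spectral_matrix B f) = spectral_matrix B f"
    by (simp add: spectral_matrix_def transpose_def vec_eq_iff mult.commute)
  moreover have "0 \<le> x \<bullet> (spectral_matrix B f *v x)" for x
  proof -
    have "x \<bullet> (spectral_matrix B f *v x) = (\<Sum>b\<in>B. f b * (b \<bullet> x)\<^sup>2)"
      by (simp add: spectral_matrix_mult_vector inner_sum_right power2_eq_square inner_commute mult.assoc)
    thus ?thesis using assms by (simp add: sum_nonneg)
  qed
  ultimately show ?thesis by (simp add: psd_def)
qed

lemma psd_sqrt_exists:
  fixes A :: "real^'n^'n"
  assumes A: "psd A"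
  shows "\<exists>R. psd R \<and> R ** R = A"
proof -
  obtain B where "eigenbasis A B"
    using symmetric_matrix_has_eigenbasis A unfolding psd_def by blast
  hence B: "orthonormal_basis B" and eig: "\<And>b. b \<in> B \<Longrightarrow> A *v b = (b \<bullet> (A *v b)) *\<^sub>R b"
    by (auto simp: eigenbasis_def)
  define R where "R = spectral_matrix B (\<lambda>b. sqrt (b \<bullet> (A *v b)))"
  have "R ** R = A"
  proof (rule matrix_eq_on_orthonormal_basis[OF B])
    fix b assume b: "b \<in> B"
    have "0 \<le> b \<bullet> (A *v b)" using A by (simp add: psd_def)
    thus "(R ** R) *v b = A *v b"
      using eig[OF b] spectral_matrix_eigenvector[OF B b]
      by (simp add: R_def matrix_vector_mul_assoc[symmetric] matrix_vector_mult_scaleR)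
  qed
  moreover have "psd R" unfolding R_def using A by (intro psd_spectral_matrix) (simp add: psd_def)
  ultimately show ?thesis by blast
qed

lemma psd_sqrt_eigenvector:
  fixes R A :: "real^'n^'n"
  assumes R: "psd R" "R ** R = A" and v: "A *v v = l *\<^sub>R v" and "0 \<le> l"
  shows "R *v v = sqrt l *\<^sub>R v"
proof (cases "l = 0")
  case True
  have "(R *v v) \<bullet> (R *v v) = v \<bullet> (A *v v)"
    using R inner_matrix_vector_transpose[of v R "R *v v"]
    by (simp add: psd_def matrix_vector_mul_assoc inner_commute)
  thus ?thesis using True v by simp
next
  case False
  define s where "s = sqrt l"
  have s: "0 < s" "s * s = l" using False \<open>0 \<le> l\<close> by (auto simp: s_def)
  define w where "w = R *v v - s *\<^sub>R v"
  have "R *v w = - s *\<^sub>R w"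
    using R(2) v s(2)
    by (simp add: w_def matrix_vector_mult_diff_distrib matrix_vector_mult_scaleR
        matrix_vector_mul_assoc algebra_simps)
  hence "0 \<le> - s * (w \<bullet> w)" using R(1) unfolding psd_def by (metis inner_scaleR_right)
  hence "w \<bullet> w \<le> 0" using s(1) by (simp add: mult_le_0_iff)
  hence "w = 0" by (metis inner_eq_zero_iff inner_ge_zero order_antisym)
  thus ?thesis by (simp add: w_def s_def)
qed

lemma psd_sqrt_unique:
  fixes A :: "real^'n^'n"
  assumes A: "psd A" and R1: "psd R1" "R1 ** R1 = A" and R2: "psd R2" "R2 ** R2 = A"
  shows "R1 = R2"
proof -
  obtain B where "eigenbasis A B"
    using symmetric_matrix_has_eigenbasis A unfolding psd_def by blast
  hence B: "orthonormal_basis B" and eig: "\<And>b. b \<in> B \<Longrightarrow> A *v b = (b \<bullet> (A *v b)) *\<^sub>R b"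
    by (auto simp: eigenbasis_def)
  show ?thesis
  proof (rule matrix_eq_on_orthonormal_basis[OF B])
    fix b assume b: "b \<in> B"
    have "0 \<le> b \<bullet> (A *v b)" using A by (simp add: psd_def)
    thus "R1 *v b = R2 *v b"
      using psd_sqrt_eigenvector[OF R1 eig[OF b]] psd_sqrt_eigenvector[OF R2 eig[OF b]] by simp
  qed
qed

lemma msqrt_psd_sqrt:
  fixes A :: "real^'n^'n"
  assumes "psd A"
  shows "psd (msqrt A)" and "msqrt A ** msqrt A = A"
proof -
  have "\<exists>!R. psd R \<and> R ** R = A"
    using psd_sqrt_exists[OF assms] psd_sqrt_unique[OF assms] by blast
  hence "psd (msqrt A) \<and> msqrt A ** msqrt A = A" unfolding msqrt_def by (rule theI')
  thus "psd (msqrt A)" and "msqrt A ** msqrt A = A" by auto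
qed

lemma psd_gram: "psd (transpose P ** (P::real^'n^'m))"
  by (simp add: psd_def matrix_transpose_mul inner_gram_matrix_vector)

lemma psd_gram_transpose: "psd ((P::real^'n^'m) ** transpose P)"
  using psd_gram[of "transpose P"] by simp

lemma trace_psd_nonneg: "psd A \<Longrightarrow> 0 \<le> trace A"
  by (simp add: trace_eq_sum_orthonormal_basis[OF orthonormal_basis_Basis] psd_def sum_nonneg)

lemma trace_msqrt_eigenbasis:
  fixes A :: "real^'n^'n"
  assumes A: "psd A" and B: "eigenbasis A B"
  shows "trace (msqrt A) = (\<Sum>b\<in>B. sqrt (b \<bullet> (A *v b)))"
proof -
  have sqrt_eig: "b \<bullet> (msqrt A *v b) = sqrt (b \<bullet> (A *v b))" if b: "b \<in> B" for b
  proof -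
    have "A *v b = (b \<bullet> (A *v b)) *\<^sub>R b" using B b by (simp add: eigenbasis_def)
    moreover have "0 \<le> b \<bullet> (A *v b)" using A by (simp add: psd_def)
    ultimately have "msqrt A *v b = sqrt (b \<bullet> (A *v b)) *\<^sub>R b"
      by (rule psd_sqrt_eigenvector[OF msqrt_psd_sqrt[OF A]])
    moreover have "b \<bullet> b = 1" using B b orthonormal_basis_inner[of B b b] by (simp add: eigenbasis_def)
    ultimately show ?thesis by simp
  qed
  have "trace (msqrt A) = (\<Sum>b\<in>B. b \<bullet> (msqrt A *v b))"
    using B trace_eq_sum_orthonormal_basis by (auto simp: eigenbasis_def)
  with sqrt_eig show ?thesis by simp
qed

lemma gram_eigenvalues_eq_if_coupled:
  fixes P :: "real^'k^'m"
  assumes u: "(transpose P ** P) *v u = \<sigma> *\<^sub>R u" and w: "(P ** transpose P) *v w = \<tau> *\<^sub>R w"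
    and coupled: "w \<bullet> (P *v u) \<noteq> 0"
  shows "\<sigma> = \<tau>"
proof -
  have "\<sigma> * (w \<bullet> (P *v u)) = w \<bullet> (P *v ((transpose P ** P) *v u))"
    by (simp add: u matrix_vector_mult_scaleR)
  also have "\<dots> = w \<bullet> ((P ** transpose P) *v (P *v u))"
    by (simp add: matrix_vector_mul_assoc matrix_mul_assoc)
  also have "\<dots> = ((P ** transpose P) *v w) \<bullet> (P *v u)"
    by (simp add: inner_matrix_vector_transpose matrix_transpose_mul)
  also have "\<dots> = \<tau> * (w \<bullet> (P *v u))" by (simp add: w)
  finally show ?thesis using coupled by simp
qed

text \<open>With \<open>\<sigma>\<^sub>u = \<Sum>\<^sub>w (w \<bullet> P u)\<^sup>2\<close> and \<open>\<tau>\<^sub>w = \<Sum>\<^sub>u (w \<bullet> P u)\<^sup>2\<close>, write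
  \<open>sqrt \<sigma> = \<sigma> / sqrt \<sigma>\<close>: the coefficient \<open>w \<bullet> P u\<close> vanishes unless \<open>\<sigma>\<^sub>u = \<tau>\<^sub>w\<close>, so the
  resulting double sum is symmetric in the two eigenbases.\<close>
lemma trace_msqrt_gram_commute:
  fixes P :: "real^'k^'m"
  shows "trace (msqrt (P ** transpose P)) = trace (msqrt (transpose P ** P))"
proof -
  obtain U where U: "eigenbasis (transpose P ** P) U"
    using symmetric_matrix_has_eigenbasis psd_gram unfolding psd_def by blast
  obtain W where W: "eigenbasis (P ** transpose P) W"
    using symmetric_matrix_has_eigenbasis psd_gram_transpose unfolding psd_def by blast
  define \<sigma> where "\<sigma> u = u \<bullet> ((transpose P ** P) *v u)" for u
  define \<tau> where "\<tau> w = w \<bullet> ((P ** transpose P) *v w)" for w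
  define c where "c w u = w \<bullet> (P *v u)" for w u
  have \<sigma>_nonneg: "0 \<le> \<sigma> u" and \<tau>_nonneg: "0 \<le> \<tau> w" for u w
    using psd_gram[of P] psd_gram_transpose[of P] by (simp_all add: \<sigma>_def \<tau>_def psd_def)
  have sqrt_eq: "t * inverse (sqrt t) = sqrt t" if "0 \<le> t" for t :: real
    using that by (metis real_div_sqrt divide_inverse)
  have \<sigma>_sum: "\<sigma> u = (\<Sum>w\<in>W. (c w u)\<^sup>2)" for u
    using orthonormal_basis_parseval[of W "P *v u"] W
    by (simp add: \<sigma>_def c_def inner_gram_matrix_vector inner_commute eigenbasis_def)
  have \<tau>_sum: "\<tau> w = (\<Sum>u\<in>U. (c w u)\<^sup>2)" for w
    using orthonormal_basis_parseval[of U "transpose P *v w"] U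
          inner_gram_matrix_vector[of w "transpose P" w]
    by (simp add: \<tau>_def c_def inner_matrix_vector_transpose eigenbasis_def)
  have coupled: "\<sigma> u = \<tau> w" if "u \<in> U" "w \<in> W" "c w u \<noteq> 0" for u w
    using gram_eigenvalues_eq_if_coupled[of P u "\<sigma> u" w "\<tau> w"] that U W
    by (simp add: \<sigma>_def \<tau>_def c_def eigenbasis_def)
  have "trace (msqrt (transpose P ** P)) = (\<Sum>u\<in>U. sqrt (\<sigma> u))"
    using trace_msqrt_eigenbasis[OF psd_gram U] by (simp add: \<sigma>_def)
  also have "\<dots> = (\<Sum>u\<in>U. \<sigma> u * inverse (sqrt (\<sigma> u)))"
    by (simp add: sqrt_eq \<sigma>_nonneg)
  also have "\<dots> = (\<Sum>u\<in>U. \<Sum>w\<in>W. (c w u)\<^sup>2 * inverse (sqrt (\<sigma> u)))"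
    by (simp add: \<sigma>_sum sum_distrib_right)
  also have "\<dots> = (\<Sum>u\<in>U. \<Sum>w\<in>W. (c w u)\<^sup>2 * inverse (sqrt (\<tau> w)))"
    by (intro sum.cong refl) (metis coupled mult_zero_left power_zero_numeral)
  also have "\<dots> = (\<Sum>w\<in>W. \<Sum>u\<in>U. (c w u)\<^sup>2 * inverse (sqrt (\<tau> w)))"
    by (rule sum.swap)
  also have "\<dots> = (\<Sum>w\<in>W. \<tau> w * inverse (sqrt (\<tau> w)))"
    by (simp add: \<tau>_sum sum_distrib_right)
  also have "\<dots> = (\<Sum>w\<in>W. sqrt (\<tau> w))"
    by (simp add: sqrt_eq \<tau>_nonneg)
  also have "\<dots> = trace (msqrt (P ** transpose P))"
    using trace_msqrt_eigenbasis[OF psd_gram_transpose W] by (simp add: \<tau>_def)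
  finally show ?thesis ..
qed

lemma bessel_inequality:
  fixes v :: "'i \<Rightarrow> 'a::real_inner"
  assumes "finite I" and orth: "\<And>i j. i \<in> I \<Longrightarrow> j \<in> I \<Longrightarrow> i \<noteq> j \<Longrightarrow> v i \<bullet> v j = 0"
    and le1: "\<And>i. i \<in> I \<Longrightarrow> v i \<bullet> v i \<le> 1"
  shows "(\<Sum>i\<in>I. (x \<bullet> v i)\<^sup>2) \<le> x \<bullet> x"
proof -
  define p where "p = (\<Sum>i\<in>I. (x \<bullet> v i) *\<^sub>R v i)"
  define S where "S = (\<Sum>i\<in>I. (x \<bullet> v i)\<^sup>2)"
  have xp: "x \<bullet> p = S" by (simp add: p_def S_def inner_sum_right power2_eq_square)
  have "p \<bullet> p = (\<Sum>i\<in>I. \<Sum>j\<in>I. (x \<bullet> v i) * (x \<bullet> v j) * (v j \<bullet> v i))"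
    by (simp add: p_def inner_sum_left inner_sum_right sum_distrib_left mult_ac)
  also have "\<dots> = (\<Sum>i\<in>I. \<Sum>j\<in>I. if j = i then (x \<bullet> v i)\<^sup>2 * (v i \<bullet> v i) else 0)"
    by (intro sum.cong refl) (auto simp: orth power2_eq_square)
  also have "\<dots> \<le> S"
    unfolding S_def using \<open>finite I\<close> by (simp add: sum_mono le1 mult_left_le)
  finally have "p \<bullet> p \<le> S" .
  moreover have "0 \<le> (x - p) \<bullet> (x - p)" by simp
  ultimately show ?thesis
    using xp by (simp add: S_def inner_diff_left inner_diff_right inner_commute)
qed

lemma sum_norm_sq_orthonormal_basis:
  fixes B :: "real^'n^'m"
  assumes "orthonormal_basis U"
  shows "(\<Sum>u\<in>U. (norm (B *v u))\<^sup>2) = trace (transpose B ** B)"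
  using trace_eq_sum_orthonormal_basis[OF assms, of "transpose B ** B"]
  by (simp add: inner_gram_matrix_vector power2_norm_eq_inner)

lemma sum_norm_sq_orthogonal_family_le:
  fixes A :: "real^'n^'m" and v :: "'i \<Rightarrow> real^'n"
  assumes "finite I" and orth: "\<And>i j. i \<in> I \<Longrightarrow> j \<in> I \<Longrightarrow> i \<noteq> j \<Longrightarrow> v i \<bullet> v j = 0"
    and le1: "\<And>i. i \<in> I \<Longrightarrow> v i \<bullet> v i \<le> 1"
  shows "(\<Sum>i\<in>I. (norm (A *v v i))\<^sup>2) \<le> trace (transpose A ** A)"
proof -
  have "(norm (A *v v i))\<^sup>2 = (\<Sum>e\<in>Basis. ((transpose A *v e) \<bullet> v i)\<^sup>2)" for i
  proof -
    have "(transpose A *v e) \<bullet> v i = (A *v v i) \<bullet> e" for e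
      by (metis inner_matrix_vector_transpose inner_commute)
    thus ?thesis
      by (simp only: orthonormal_basis_parseval[OF orthonormal_basis_Basis] power2_norm_eq_inner)
  qed
  hence "(\<Sum>i\<in>I. (norm (A *v v i))\<^sup>2) = (\<Sum>i\<in>I. \<Sum>e\<in>Basis. ((transpose A *v e) \<bullet> v i)\<^sup>2)"
    by simp
  also have "\<dots> = (\<Sum>e\<in>Basis. \<Sum>i\<in>I. ((transpose A *v e) \<bullet> v i)\<^sup>2)"
    by (rule sum.swap)
  also have "\<dots> \<le> (\<Sum>e\<in>Basis. (norm (transpose A *v e))\<^sup>2)"
    by (intro sum_mono) (simp add: bessel_inequality[OF assms] power2_norm_eq_inner)
  also have "\<dots> = trace (A ** transpose A)"
    using sum_norm_sq_orthonormal_basis[OF orthonormal_basis_Basis, of "transpose A"] by simp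
  also have "\<dots> = trace (transpose A ** A)" by (rule trace_mul_sym)
  finally show ?thesis .
qed

lemma nuclear_norm_nonneg: "0 \<le> nuclear_norm M"
  unfolding nuclear_norm_def using msqrt_psd_sqrt(1)[OF psd_gram] by (rule trace_psd_nonneg)

lemma nuclear_norm_eq_sum_norm:
  fixes M :: "real^'n^'m"
  assumes "eigenbasis (transpose M ** M) U"
  shows "nuclear_norm M = (\<Sum>u\<in>U. norm (M *v u))"
  using trace_msqrt_eigenbasis[OF psd_gram assms]
  by (simp add: nuclear_norm_def inner_gram_matrix_vector norm_eq_sqrt_inner)

text \<open>In an eigenbasis U of M^T M, M = A^T B, the vectors M u are orthogonal; normalising
  them to v u gives norm (M u) = A (v u) \<bullet> B u, and Cauchy--Schwarz together with Bessel's
  inequality for the family v bounds the sum.\<close>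
lemma nuclear_norm_transpose_mult_le:
  fixes A :: "real^'a^'m" and B :: "real^'b^'m"
  shows "nuclear_norm (transpose A ** B) \<le> sqrt (trace (transpose A ** A) * trace (transpose B ** B))"
proof -
  define M where "M = transpose A ** B"
  obtain U where U: "eigenbasis (transpose M ** M) U"
    using symmetric_matrix_has_eigenbasis psd_gram unfolding psd_def by blast
  have finU: "finite U" using U orthonormal_basis_finite by (auto simp: eigenbasis_def)
  define v where "v u = (M *v u) /\<^sub>R norm (M *v u)" for u
  have norm_Mu: "norm (M *v u) \<le> norm (A *v v u) * norm (B *v u)" for u
  proof (cases "M *v u = 0")
    case False
    have "norm (M *v u) = v u \<bullet> (M *v u)"
      using False by (simp add: v_def power2_norm_eq_inner[symmetric] power2_eq_square)
    also have "\<dots> = (A *v v u) \<bullet> (B *v u)"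
      unfolding M_def matrix_vector_mul_assoc[symmetric] inner_matrix_vector_transpose by simp
    finally show ?thesis by (simp add: norm_cauchy_schwarz)
  qed simp
  have v_orth: "v i \<bullet> v j = 0" if "i \<in> U" "j \<in> U" "i \<noteq> j" for i j
  proof -
    have "(M *v i) \<bullet> (M *v j) = (j \<bullet> ((transpose M ** M) *v j)) * (i \<bullet> j)"
      using U that(2) by (metis eigenbasis_def inner_gram_matrix_vector inner_scaleR_right)
    thus ?thesis
      using U that orthonormal_basis_inner[of U i j] by (simp add: v_def eigenbasis_def)
  qed
  have v_le1: "v i \<bullet> v i \<le> 1" for i
    by (cases "M *v i = 0") (simp_all add: v_def power2_norm_eq_inner[symmetric])
  have "nuclear_norm M \<le> (\<Sum>u\<in>U. norm (A *v v u) * norm (B *v u))"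
    by (simp add: nuclear_norm_eq_sum_norm[OF U] sum_mono norm_Mu)
  also have "\<dots> \<le> sqrt ((\<Sum>u\<in>U. (norm (A *v v u))\<^sup>2) * (\<Sum>u\<in>U. (norm (B *v u))\<^sup>2))"
    by (rule real_le_rsqrt[OF Cauchy_Schwarz_ineq_sum])
  also have "\<dots> = sqrt ((\<Sum>u\<in>U. (norm (A *v v u))\<^sup>2) * trace (transpose B ** B))"
    using U by (simp add: sum_norm_sq_orthonormal_basis eigenbasis_def)
  also have "\<dots> \<le> sqrt (trace (transpose A ** A) * trace (transpose B ** B))"
    by (intro real_sqrt_le_mono mult_right_mono trace_psd_nonneg psd_gram
        sum_norm_sq_orthogonal_family_le[OF finU v_orth v_le1])
  finally show ?thesis by (simp add: M_def)
qed

lemma fidelity_gram: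
  fixes A :: "real^'a^'m" and B :: "real^'b^'m"
  shows "fidelity (A ** transpose A) (B ** transpose B) = nuclear_norm (transpose A ** B)"
proof -
  define R where "R = msqrt (A ** transpose A)"
  have R_sym: "transpose R = R" using msqrt_psd_sqrt(1)[OF psd_gram_transpose[of A]] by (simp add: R_def psd_def)
  have RR: "R ** R = A ** transpose A" using msqrt_psd_sqrt(2)[OF psd_gram_transpose[of A]] by (simp add: R_def)
  have "R ** (B ** transpose B) ** R = (R ** B) ** transpose (R ** B)"
    by (simp add: matrix_transpose_mul R_sym matrix_mul_assoc)
  moreover have "transpose (R ** B) ** (R ** B) = transpose B ** (R ** R) ** B"
    by (simp add: matrix_transpose_mul R_sym matrix_mul_assoc)
  moreover have "\<dots> = transpose (transpose A ** B) ** (transpose A ** B)"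
    by (simp add: RR matrix_transpose_mul matrix_mul_assoc)
  ultimately show ?thesis
    by (simp add: fidelity_def nuclear_norm_def R_def[symmetric] trace_msqrt_gram_commute)
qed

lemma cos_arccos_nuclear_norm_ratio:
  fixes A :: "real^'a^'m" and B :: "real^'b^'m"
  defines "r \<equiv> nuclear_norm (transpose A ** B) / sqrt (trace (transpose A ** A) * trace (transpose B ** B))"
  shows "cos (arccos r) = r"
proof (rule cos_arccos)
  have "0 \<le> r"
    unfolding r_def by (intro divide_nonneg_nonneg nuclear_norm_nonneg real_sqrt_ge_zero
        mult_nonneg_nonneg trace_psd_nonneg psd_gram)
  thus "-1 \<le> r" by simp
  have "n / d \<le> 1" if "n \<le> d" "0 \<le> n" for n d :: real
    using that by (cases "d = 0") (auto simp: divide_le_eq_1)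
  thus "r \<le> 1"
    using nuclear_norm_transpose_mult_le[of A B] nuclear_norm_nonneg[of "transpose A ** B"]
    unfolding r_def by blast
qed

lemma transpose_centering: "transpose centering = centering"
  by (auto simp: centering_def transpose_def vec_eq_iff)

lemma centering_idem: "centering ** centering = centering"
proof -
  define c :: real where "c = 1 / real CARD('a)"
  have "(\<Sum>k\<in>UNIV. ((if i = k then 1 else 0) - c) * ((if k = j then 1 else 0) - c))
      = (if i = j then 1 else 0) - c" for i j :: 'a
  proof -
    have "(\<Sum>k\<in>UNIV. ((if i = k then 1 else 0) - c) * ((if k = j then 1 else 0) - c))
      = (\<Sum>k\<in>UNIV. (if k = i then (if i = j then 1 else 0) else 0) - (if i = k then c else 0)
            - (if k = j then c else 0) + c * c)"
      by (intro sum.cong refl) (auto simp: algebra_simps)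
    also have "\<dots> = (if i = j then 1 else 0) - c - c + real CARD('a) * c * c"
      by (simp add: sum.distrib sum_subtractf)
    finally show ?thesis by (simp add: c_def)
  qed
  thus ?thesis by (simp add: vec_eq_iff matrix_matrix_mult_def centering_def c_def)
qed

lemma SigmaXY_eq_centered: "SigmaXY X Y = transpose (centering ** X) ** (centering ** Y)"
proof -
  have "transpose (centering ** X) ** (centering ** Y) = transpose X ** (centering ** centering) ** Y"
    by (simp add: matrix_transpose_mul transpose_centering matrix_mul_assoc)
  thus ?thesis by (simp add: SigmaXY_def centering_idem)
qed

lemma SigmaX_eq_centered: "SigmaX X = transpose (centering ** X) ** (centering ** X)"
  using SigmaXY_eq_centered[of X X] by (simp add: SigmaX_def SigmaXY_def)

theorem theorem1:
  fixes X :: "real^'nx^'m" and Y :: "real^'ny^'m"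
  defines "KX \<equiv> centering ** X ** transpose X ** centering"
      and "KY \<equiv> centering ** Y ** transpose Y ** centering"
  shows "bures KX KY = procrustes X Y \<and>
         (centering ** X \<noteq> 0 \<and> centering ** Y \<noteq> 0 \<longrightarrow> NBS KX KY = cos (shape_dist X Y))"
proof -
  define A where "A = (centering :: real^'m^'m) ** X"
  define B where "B = (centering :: real^'m^'m) ** Y"
  have K: "KX = A ** transpose A" "KY = B ** transpose B"
    by (simp_all add: KX_def KY_def A_def B_def matrix_transpose_mul transpose_centering matrix_mul_assoc)
  have SX: "SigmaX X = transpose A ** A" "SigmaX Y = transpose B ** B"
    and SXY: "SigmaXY X Y = transpose A ** B"
    by (simp_all add: A_def B_def SigmaX_eq_centered SigmaXY_eq_centered)
  have tr: "trace KX = trace (SigmaX X)" "trace KY = trace (SigmaX Y)"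
    unfolding K SX by (rule trace_mul_sym)+
  have fid: "fidelity KX KY = nuclear_norm (SigmaXY X Y)"
    unfolding K SXY by (rule fidelity_gram)
  have "NBS KX KY = cos (shape_dist X Y)"
    unfolding NBS_def shape_dist_def tr fid SX SXY by (rule cos_arccos_nuclear_norm_ratio[symmetric])
  then show ?thesis by (simp add: bures_def procrustes_def tr fid)
qed

end
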